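(* Let $\Omega\subset\mathbb{C}$ be a domain and let $\omega\in L^2_{\mathrm{loc}}(\Omega)$ satisfy a weak reverse Hölder inequality: there is a constant $c$ such that $$\Bigl(\frac1{r^2}\int_{\mathbb{D}(a,r)}\omega^2\,dm\Bigr)^{1/2}\le\frac{c}{r^2}\int_{\mathbb{D}(a,2r)}|\omega|\,dm$$ for every disk with $\mathbb{D}(a,2r)\subset\Omega$. Then for almost every point $z_0$ of the zero set $\{z\in\Omega:\omega(z)=0\}$ and for every positive integer $N$ there exists $r_0=r_0(z_0,N)>0$ with $\mathbb{D}(z_0,2r_0)\subset\Omega$ such that $$\int_{\mathbb{D}(z_0,r)}|\omega|\,dm\le\frac{r^N}{r_0^N}\int_{\mathbb{D}(z_0,2r_0)}|\omega|\,dm\qquad\text{for all }0<r\le r_0.$$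
   Context: $m$ denotes planar Lebesgue measure and $\mathbb{D}(a,r)$ the open disk of center $a$ and radius $r$. *)

theory Defs
  imports "HOL-Analysis.Analysis"
begin

text \<open>Planar Lebesgue measure is lebesgue on type complex; the open disk D(a,r) is ball a r.\<close>

definition L2_loc :: "complex set \<Rightarrow> (complex \<Rightarrow> real) \<Rightarrow> bool" where
  "L2_loc \<Omega> \<omega> \<longleftrightarrow>
     set_borel_measurable lebesgue \<Omega> \<omega> \<and>
     (\<forall>K. compact K \<and> K \<subseteq> \<Omega> \<longrightarrow> set_integrable lebesgue K (\<lambda>z. (\<omega> z)\<^sup>2))"

definition weak_RHI :: "complex set \<Rightarrow> (complex \<Rightarrow> real) \<Rightarrow> bool" where
  "weak_RHI \<Omega> \<omega> \<longleftrightarrow> (\<exists>c::real. \<forall>a r. 0 < r \<and> ball a (2 * r) \<subseteq> \<Omega> \<longrightarrow>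
     sqrt ((1 / r\<^sup>2) * (LINT z:ball a r|lebesgue. (\<omega> z)\<^sup>2))
       \<le> (c / r\<^sup>2) * (LINT z:ball a (2 * r)|lebesgue. \<bar>\<omega> z\<bar>))"

end

theory Submission
  imports Defs
begin

text \<open>At a Lebesgue density point \<open>z0\<close> of the zero set \<open>Z\<close>, the set \<open>D(z0,s) - Z\<close> where
  \<open>\<omega>\<close> lives has measure \<open>o(s\<^sup>2)\<close>. By Cauchy--Schwarz, the integral of \<open>|\<omega>|\<close> over \<open>D(z0,s)\<close>
  is at most \<open>m(D(z0,s) - Z)\<^sup>1\<^sup>/\<^sup>2\<close> times the \<open>L\<^sup>2\<close> norm of \<open>\<omega>\<close> on \<open>D(z0,s)\<close>, which the reverse
  Hoelder inequality bounds by \<open>c/s\<close> times the integral of \<open>|\<omega>|\<close> over \<open>D(z0,2s)\<close>. So for small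
  \<open>s\<close> the integral over \<open>D(z0,s)\<close> is at most \<open>2\<^sup>-\<^sup>N\<close> times the one over \<open>D(z0,2s)\<close>, and
  iterating this halving step gives the decay \<open>r\<^sup>N\<close>. Almost every point of \<open>Z\<close> is a density
  point by the Vitali covering theorem.\<close>

definition density_point :: "'a::euclidean_space set \<Rightarrow> 'a \<Rightarrow> bool" where
  "density_point Z x \<longleftrightarrow> (\<forall>e>0. \<forall>\<^sub>F r in at_right 0.
     measure lebesgue (ball x r - Z) \<le> e * measure lebesgue (ball x r))"

lemma measure_disjoint_UN_le_measure_diff:
  fixes F :: "'i \<Rightarrow> 'a set"
  assumes I: "finite I" and Z: "Z \<in> sets M" and G: "G - Z \<in> fmeasurable M" and e: "0 < e"
    and F: "\<And>i. i \<in> I \<Longrightarrow> F i \<in> fmeasurable M" "\<And>i. i \<in> I \<Longrightarrow> F i \<subseteq> G"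
    and disj: "pairwise (\<lambda>i j. disjnt (F i) (F j)) I"
    and sparse: "\<And>i. i \<in> I \<Longrightarrow> e * measure M (F i) < measure M (F i - Z)"
  shows "measure M (\<Union>i\<in>I. F i) \<le> measure M (G - Z) / e"
proof -
  have disj': "pairwise (\<lambda>i j. disjnt (F i - Z) (F j - Z)) I"
    by (rule pairwise_mono[OF disj]) (auto simp: disjnt_def)
  have "measure M (\<Union>i\<in>I. F i) = (\<Sum>i\<in>I. measure M (F i))"
    by (rule measure_UNION') (use I F disj in auto)
  also have "\<dots> \<le> (\<Sum>i\<in>I. measure M (F i - Z) / e)"
    using sparse e by (intro sum_mono) (simp add: field_simps less_imp_le)
  also have "\<dots> = measure M (\<Union>i\<in>I. F i - Z) / e"
    by (subst measure_UNION') (use I F Z disj' in \<open>auto simp: sum_divide_distrib intro: fmeasurable_Diff\<close>)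
  also have "\<dots> \<le> measure M (G - Z) / e"
  proof -
    have "(\<Union>i\<in>I. F i - Z) \<subseteq> G - Z" using F by blast
    moreover have "(\<Union>i\<in>I. F i - Z) \<in> sets M"
      using I F Z by (intro sets.finite_UN) auto
    ultimately show ?thesis
      using G e by (intro divide_right_mono measure_mono_fmeasurable) auto
  qed
  finally show ?thesis .
qed

text \<open>Vitali-cover the bad points by disjoint balls inside an open \<open>G \<supseteq> Z\<close> with
  \<open>m(G - Z) < \<eta> e\<close>; each ball puts more than the fraction \<open>e\<close> of its measure into \<open>G - Z\<close>.\<close>

lemma negligible_non_density_points:
  fixes Z :: "'a::euclidean_space set" and e :: real
  assumes Z: "Z \<in> sets lebesgue" and e: "e > 0"
  shows "negligible {x\<in>Z. \<not> (\<forall>\<^sub>F r in at_right 0.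
            measure lebesgue (ball x r - Z) \<le> e * measure lebesgue (ball x r))}"
    (is "negligible ?B")
  unfolding negligible_outer_le
proof (intro allI impI)
  fix \<eta> :: real assume "\<eta> > 0"
  obtain G where G: "open G" "Z \<subseteq> G" "G - Z \<in> lmeasurable"
      and Gm: "emeasure lebesgue (G - Z) < ennreal (\<eta> * e)"
    using sets_lebesgue_outer_open[OF Z, of "\<eta> * e"] \<open>\<eta> > 0\<close> e by auto
  have GZ: "measure lebesgue (G - Z) < \<eta> * e"
    using Gm G(3) by (simp add: emeasure_eq_measure2 ennreal_less_iff)
  let ?F = "\<lambda>i. ball (fst i) (snd i)"
  let ?K = "{(x,r). x \<in> ?B \<and> 0 < r \<and> ball x r \<subseteq> G \<and>
              e * measure lebesgue (ball x r) < measure lebesgue (ball x r - Z)}"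
  obtain C where "countable C" and Csub: "C \<subseteq> ?K"
    and pwC: "pairwise (\<lambda>i j. disjnt (?F i) (?F j)) C"
    and negC: "negligible (?B - (\<Union>i \<in> C. ?F i))"
  proof (rule Vitali_covering_theorem_balls [of ?B ?K fst snd])
    fix x and d :: real
    assume x: "x \<in> ?B" and "d > 0"
    obtain k where "k > 0" and k: "ball x k \<subseteq> G"
      using x G(1,2) openE by blast
    have "\<forall>b>0. \<exists>r>0. r < b \<and> \<not> measure lebesgue (ball x r - Z) \<le> e * measure lebesgue (ball x r)"
      using x unfolding eventually_at_right_field by blast
    then obtain r where r: "0 < r" "r < min d k"
      and "\<not> measure lebesgue (ball x r - Z) \<le> e * measure lebesgue (ball x r)"
      using \<open>d > 0\<close> \<open>k > 0\<close> by (meson min_less_iff_conj)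
    then have bad: "e * measure lebesgue (ball x r) < measure lebesgue (ball x r - Z)"
      by (simp only: not_le)
    have "ball x r \<subseteq> G" using r k by (meson min.strict_boundedE order.trans less_imp_le subset_ball)
    then show "\<exists>i. i \<in> ?K \<and> x \<in> ball (fst i) (snd i) \<and> snd i < d"
      using x r bad by (intro exI[of _ "(x,r)"]) simp
  qed
  have C_sub: "?F i \<subseteq> G" if "i \<in> C" for i using that Csub by (cases i) auto
  have C_sparse: "e * measure lebesgue (?F i) < measure lebesgue (?F i - Z)" if "i \<in> C" for i
    using that Csub by auto
  have finite_union_le: "measure lebesgue (\<Union>i\<in>I. ?F i) \<le> \<eta>" if "I \<subseteq> C" "finite I" for I
  proof -
    have "measure lebesgue (\<Union>i\<in>I. ?F i) \<le> measure lebesgue (G - Z) / e"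
    proof (rule measure_disjoint_UN_le_measure_diff[OF \<open>finite I\<close> Z G(3) e])
      show "pairwise (\<lambda>i j. disjnt (?F i) (?F j)) I" using pwC \<open>I \<subseteq> C\<close> pairwise_subset by blast
    qed (use that C_sub C_sparse in \<open>auto simp: lmeasurable_ball\<close>)
    also have "\<dots> \<le> \<eta>" using GZ e by (simp add: field_simps)
    finally show ?thesis .
  qed
  have Um: "(\<Union>i\<in>C. ?F i) \<in> lmeasurable" and Ule: "measure lebesgue (\<Union>i\<in>C. ?F i) \<le> \<eta>"
    using fmeasurable_UN_bound[OF \<open>countable C\<close> _ finite_union_le]
      measure_UN_bound[OF \<open>countable C\<close> _ finite_union_le]
    by auto
  let ?N = "?B - (\<Union>i \<in> C. ?F i)"
  have Nm: "?N \<in> lmeasurable" using negC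
    by (simp add: negligible_iff_null_sets null_sets_def fmeasurableI)
  show "\<exists>T. ?B \<subseteq> T \<and> T \<in> lmeasurable \<and> measure lebesgue T \<le> \<eta>"
  proof (intro exI conjI)
    show "?B \<subseteq> ?N \<union> (\<Union>i\<in>C. ?F i)" by blast
    show "?N \<union> (\<Union>i\<in>C. ?F i) \<in> lmeasurable" by (rule fmeasurable.Un[OF Nm Um])
    have "measure lebesgue (?N \<union> (\<Union>i\<in>C. ?F i)) \<le> measure lebesgue ?N + measure lebesgue (\<Union>i\<in>C. ?F i)"
      using Nm Um by (intro measure_Un_le) auto
    also have "measure lebesgue ?N = 0" using negC negligible_imp_measure0 by blast
    finally show "measure lebesgue (?N \<union> (\<Union>i\<in>C. ?F i)) \<le> \<eta>" using Ule by simp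
  qed
qed

lemma AE_density_point:
  fixes Z :: "'a::euclidean_space set"
  assumes Z: "Z \<in> sets lebesgue"
  shows "AE x in lebesgue. x \<in> Z \<longrightarrow> density_point Z x"
proof -
  let ?B = "\<lambda>e. {x\<in>Z. \<not> (\<forall>\<^sub>F r in at_right 0.
            measure lebesgue (ball x r - Z) \<le> e * measure lebesgue (ball x r))}"
  have "negligible (\<Union>n. ?B (1 / Suc n))"
    by (intro negligible_Union_nat negligible_non_density_points[OF Z]) simp
  then have "AE x in lebesgue. x \<notin> (\<Union>n. ?B (1 / Suc n))"
    by (intro AE_not_in) (simp add: negligible_iff_null_sets)
  then show ?thesis
  proof (rule eventually_mono, intro impI)
    fix x assume x: "x \<notin> (\<Union>n. ?B (1 / Suc n))" and "x \<in> Z"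
    show "density_point Z x"
      unfolding density_point_def
    proof (intro allI impI)
      fix e :: real assume "e > 0"
      then obtain n where n: "1 / Suc n < e" using nat_approx_posE by blast
      from x \<open>x \<in> Z\<close> have "\<forall>\<^sub>F r in at_right 0.
          measure lebesgue (ball x r - Z) \<le> 1 / Suc n * measure lebesgue (ball x r)"
        by blast
      then show "\<forall>\<^sub>F r in at_right 0. measure lebesgue (ball x r - Z) \<le> e * measure lebesgue (ball x r)"
        by eventually_elim (use n in \<open>meson measure_nonneg mult_right_mono order.trans less_imp_le\<close>)
    qed
  qed
qed

lemma density_point_small_radius:
  fixes Z \<Omega> :: "'a::euclidean_space set"
  assumes "open \<Omega>" "x \<in> \<Omega>" "density_point Z x" "0 < e"
  obtains r0 where "0 < r0" "cball x (2 * r0) \<subseteq> \<Omega>"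
    "\<And>s. 0 < s \<Longrightarrow> s \<le> r0 \<Longrightarrow> measure lebesgue (ball x s - Z) \<le> e * measure lebesgue (ball x s)"
proof -
  have "\<forall>\<^sub>F s in at_right 0. measure lebesgue (ball x s - Z) \<le> e * measure lebesgue (ball x s)"
    using assms(3,4) unfolding density_point_def by blast
  then obtain \<delta> where "0 < \<delta>" and small: "\<And>s. 0 < s \<Longrightarrow> s < \<delta> \<Longrightarrow>
      measure lebesgue (ball x s - Z) \<le> e * measure lebesgue (ball x s)"
    unfolding eventually_at_right_field by blast
  obtain \<epsilon> where "0 < \<epsilon>" "ball x \<epsilon> \<subseteq> \<Omega>" using assms(1,2) openE by blast
  define r0 where "r0 = min (\<delta> / 2) (\<epsilon> / 4)"
  show ?thesis
  proof
    show "0 < r0" using \<open>0 < \<delta>\<close> \<open>0 < \<epsilon>\<close> by (simp add: r0_def)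
    have "2 * r0 < \<epsilon>" using \<open>0 < \<epsilon>\<close> by (simp add: r0_def)
    then have "cball x (2 * r0) \<subseteq> ball x \<epsilon>" by (simp add: cball_subset_ball_iff)
    then show "cball x (2 * r0) \<subseteq> \<Omega>" using \<open>ball x \<epsilon> \<subseteq> \<Omega>\<close> by blast
    fix s assume "0 < s" "s \<le> r0"
    moreover have "r0 < \<delta>" using \<open>0 < \<delta>\<close> by (simp add: r0_def)
    ultimately show "measure lebesgue (ball x s - Z) \<le> e * measure lebesgue (ball x s)"
      using small by simp
  qed
qed

lemma set_integral_mono_set:
  fixes f :: "'a \<Rightarrow> real"
  assumes "set_integrable M B f" "A \<in> sets M" "A \<subseteq> B" "\<And>x. x \<in> B \<Longrightarrow> 0 \<le> f x"
  shows "(LINT x:A|M. f x) \<le> (LINT x:B|M. f x)"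
  using assms set_integrable_subset[OF assms(1-3)]
  unfolding set_lebesgue_integral_def set_integrable_def
  by (intro integral_mono) (auto simp: indicator_def)

lemma le_sqrt_mult_of_amgm_bound:
  fixes I A B :: real
  assumes "0 \<le> A" "0 \<le> B" and bound: "\<And>t. 0 < t \<Longrightarrow> 2 * I \<le> t * A + B / t"
  shows "I \<le> sqrt (B * A)"
proof (cases "I \<le> 0")
  case True
  then show ?thesis using assms by (simp add: order_trans[OF _ real_sqrt_ge_zero])
next
  case False
  then have I: "0 < I" by simp
  have "0 < A"
  proof (rule ccontr)
    assume "\<not> 0 < A"
    with assms have "2 * I \<le> B / ((B + 1) / (2 * I))" using bound[of "(B + 1) / (2 * I)"] I by simp
    also have "\<dots> = 2 * I * (B / (B + 1))" using assms by (simp add: field_simps)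
    also have "\<dots> < 2 * I" using I assms by (simp add: field_simps)
    finally show False by simp
  qed
  have "2 * I \<le> I / A * A + B / (I / A)" using bound[of "I / A"] I \<open>0 < A\<close> by simp
  then have "I\<^sup>2 \<le> B * A" using I \<open>0 < A\<close> by (simp add: field_simps power2_eq_square)
  then show ?thesis by (rule real_le_rsqrt)
qed

text \<open>A form of Cauchy--Schwarz, obtained by integrating \<open>2|w| \<le> t w\<^sup>2 + 1/t\<close> and
  optimising over \<open>t\<close>.\<close>

lemma set_integral_abs_le_sqrt_measure_support:
  fixes f :: "'a \<Rightarrow> real"
  assumes int_abs: "set_integrable M S (\<lambda>x. \<bar>f x\<bar>)"
    and int_sq: "set_integrable M S (\<lambda>x. (f x)\<^sup>2)"
    and E: "E \<in> fmeasurable M" and supp: "\<And>x. x \<in> S \<Longrightarrow> f x \<noteq> 0 \<Longrightarrow> x \<in> E"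
  shows "(LINT x:S|M. \<bar>f x\<bar>) \<le> sqrt (measure M E * (LINT x:S|M. (f x)\<^sup>2))"
proof (rule le_sqrt_mult_of_amgm_bound)
  show "0 \<le> (LINT x:S|M. (f x)\<^sup>2)" by (simp add: set_lebesgue_integral_def)
  show "0 \<le> measure M E" by simp
  fix t :: real assume t: "0 < t"
  have amgm: "2 * \<bar>w\<bar> \<le> t * w\<^sup>2 + 1 / t" for w :: real
  proof -
    have "0 \<le> (t * \<bar>w\<bar> - 1)\<^sup>2 / t" using t by simp
    also have "\<dots> = t * w\<^sup>2 + 1 / t - 2 * \<bar>w\<bar>"
      using t by (simp add: power2_eq_square field_simps)
    finally show ?thesis by simp
  qed
  have int_E: "integrable M (indicator E :: 'a \<Rightarrow> real)"
    using E by (intro integrable_real_indicator) (auto simp: fmeasurable_def)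
  have "2 * (LINT x:S|M. \<bar>f x\<bar>) = (LINT x|M. 2 * (indicator S x * \<bar>f x\<bar>))"
    by (simp add: set_lebesgue_integral_def)
  also have "\<dots> \<le> (LINT x|M. t * (indicator S x * (f x)\<^sup>2) + 1 / t * indicator E x)"
  proof (rule integral_mono)
    show "integrable M (\<lambda>x. 2 * (indicator S x * \<bar>f x\<bar>))"
      using int_abs by (simp add: set_integrable_def)
    show "integrable M (\<lambda>x. t * (indicator S x * (f x)\<^sup>2) + 1 / t * indicator E x)"
      using int_sq int_E by (simp add: set_integrable_def)
    fix x
    show "2 * (indicator S x * \<bar>f x\<bar>) \<le> t * (indicator S x * (f x)\<^sup>2) + 1 / t * indicator E x"
      using amgm[of "f x"] supp[of x] t by (cases "x \<in> S \<and> f x \<noteq> 0") (auto simp: indicator_def)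
  qed
  also have "\<dots> = t * (LINT x:S|M. (f x)\<^sup>2) + measure M E / t"
    using int_sq int_E E by (simp add: set_lebesgue_integral_def set_integrable_def fmeasurable_def)
  finally show "2 * (LINT x:S|M. \<bar>f x\<bar>) \<le> t * (LINT x:S|M. (f x)\<^sup>2) + measure M E / t" .
qed

lemma L2_loc_set_integrable_square:
  assumes L2: "L2_loc \<Omega> \<omega>" and K: "compact K" "K \<subseteq> \<Omega>" and S: "S \<in> sets lebesgue" "S \<subseteq> K"
  shows "set_integrable lebesgue S (\<lambda>z. (\<omega> z)\<^sup>2)"
proof (rule set_integrable_subset[OF _ S])
  show "set_integrable lebesgue K (\<lambda>z. (\<omega> z)\<^sup>2)" using L2 K unfolding L2_loc_def by blast
qed

lemma L2_loc_set_integrable_abs: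
  assumes L2: "L2_loc \<Omega> \<omega>" and K: "compact K" "K \<subseteq> \<Omega>" and S: "S \<in> sets lebesgue" "S \<subseteq> K"
  shows "set_integrable lebesgue S (\<lambda>z. \<bar>\<omega> z\<bar>)"
proof (rule set_integrable_abs, rule set_integrable_bound)
  have "S \<in> lmeasurable" using K S by (intro fmeasurableI2[OF lmeasurable_compact]) auto
  then have "integrable lebesgue (indicator S :: complex \<Rightarrow> real)"
    by (intro integrable_real_indicator) (auto simp: fmeasurable_def)
  then have "set_integrable lebesgue S (\<lambda>_. 1 :: real)"
    by (simp add: set_integrable_def)
  then show "set_integrable lebesgue S (\<lambda>z. 1 + (\<omega> z)\<^sup>2)"
    using L2_loc_set_integrable_square[OF assms] by (rule set_integral_add)
  have "set_borel_measurable lebesgue \<Omega> \<omega>" using L2 unfolding L2_loc_def by blast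
  then show "set_borel_measurable lebesgue S \<omega>"
    by (rule set_borel_measurable_subset) (use S K in auto)
  have "norm w \<le> norm (1 + w\<^sup>2)" for w :: real
  proof -
    have "0 \<le> (\<bar>w\<bar> - 1)\<^sup>2" by simp
    then have "2 * \<bar>w\<bar> \<le> 1 + w\<^sup>2" by (simp add: power2_diff)
    then show ?thesis by simp
  qed
  then show "AE z in lebesgue. z \<in> S \<longrightarrow> norm (\<omega> z) \<le> norm (1 + (\<omega> z)\<^sup>2)" by blast
qed

lemma L2_loc_zero_set_measurable:
  assumes "open \<Omega>" "L2_loc \<Omega> \<omega>"
  shows "{z\<in>\<Omega>. \<omega> z = 0} \<in> sets lebesgue"
proof -
  have "(\<lambda>z. indicator \<Omega> z * \<omega> z) \<in> borel_measurable lebesgue"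
    using assms(2) by (simp add: L2_loc_def set_borel_measurable_def)
  then have "(\<lambda>z. indicator \<Omega> z * \<omega> z) -` {0} \<inter> space lebesgue \<in> sets lebesgue"
    by (rule borel_measurable_vimage)
  then have "((\<lambda>z. indicator \<Omega> z * \<omega> z) -` {0} \<inter> space lebesgue) \<inter> \<Omega> \<in> sets lebesgue"
    using assms(1) by auto
  also have "((\<lambda>z. indicator \<Omega> z * \<omega> z) -` {0} \<inter> space lebesgue) \<inter> \<Omega> = {z\<in>\<Omega>. \<omega> z = 0}"
    by (auto simp: indicator_def)
  finally show ?thesis .
qed

lemma weak_RHI_pos_constant:
  assumes "weak_RHI \<Omega> \<omega>"
  obtains C where "C > 0" and "\<And>a r. 0 < r \<Longrightarrow> ball a (2 * r) \<subseteq> \<Omega> \<Longrightarrow>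
     sqrt ((1 / r\<^sup>2) * (LINT z:ball a r|lebesgue. (\<omega> z)\<^sup>2))
       \<le> (C / r\<^sup>2) * (LINT z:ball a (2 * r)|lebesgue. \<bar>\<omega> z\<bar>)"
proof -
  obtain c where c: "\<And>a r. 0 < r \<Longrightarrow> ball a (2 * r) \<subseteq> \<Omega> \<Longrightarrow>
     sqrt ((1 / r\<^sup>2) * (LINT z:ball a r|lebesgue. (\<omega> z)\<^sup>2))
       \<le> (c / r\<^sup>2) * (LINT z:ball a (2 * r)|lebesgue. \<bar>\<omega> z\<bar>)"
    using assms unfolding weak_RHI_def by blast
  show ?thesis
  proof (rule that[of "max c 1"])
    fix a :: complex and r :: real
    assume r: "0 < r" "ball a (2 * r) \<subseteq> \<Omega>"
    have "0 \<le> (LINT z:ball a (2 * r)|lebesgue. \<bar>\<omega> z\<bar>)"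
      by (simp add: set_lebesgue_integral_def)
    then have "(c / r\<^sup>2) * (LINT z:ball a (2 * r)|lebesgue. \<bar>\<omega> z\<bar>)
        \<le> (max c 1 / r\<^sup>2) * (LINT z:ball a (2 * r)|lebesgue. \<bar>\<omega> z\<bar>)"
      by (intro mult_right_mono divide_right_mono) auto
    with c[OF r] show "sqrt ((1 / r\<^sup>2) * (LINT z:ball a r|lebesgue. (\<omega> z)\<^sup>2))
       \<le> (max c 1 / r\<^sup>2) * (LINT z:ball a (2 * r)|lebesgue. \<bar>\<omega> z\<bar>)"
      by linarith
  qed simp
qed

lemma reverse_Hoelder_halving_step:
  fixes \<omega> :: "'a::euclidean_space \<Rightarrow> real"
  assumes s: "0 < s" and k: "0 \<le> k"
    and int_abs: "set_integrable lebesgue (ball a s) (\<lambda>z. \<bar>\<omega> z\<bar>)"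
    and int_sq: "set_integrable lebesgue (ball a s) (\<lambda>z. (\<omega> z)\<^sup>2)"
    and E: "E \<in> lmeasurable" "\<And>z. z \<in> ball a s \<Longrightarrow> \<omega> z \<noteq> 0 \<Longrightarrow> z \<in> E"
      and E_small: "measure lebesgue E \<le> k\<^sup>2 * s\<^sup>2"
    and RHI: "sqrt ((1 / s\<^sup>2) * (LINT z:ball a s|lebesgue. (\<omega> z)\<^sup>2)) \<le> (C / s\<^sup>2) * J"
  shows "(LINT z:ball a s|lebesgue. \<bar>\<omega> z\<bar>) \<le> k * C * J"
proof -
  define A where "A = (LINT z:ball a s|lebesgue. (\<omega> z)\<^sup>2)"
  have A: "0 \<le> A" by (simp add: A_def set_lebesgue_integral_def)
  have "0 \<le> (C / s\<^sup>2) * J"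
    by (rule order_trans[OF _ RHI]) (simp add: A_def[symmetric] A)
  moreover have "C * J = s\<^sup>2 * ((C / s\<^sup>2) * J)" using s by simp
  ultimately have CJ: "0 \<le> C * J" by (metis mult_nonneg_nonneg zero_le_power2)
  have "A / s\<^sup>2 \<le> (C * J / s\<^sup>2)\<^sup>2"
    using sqrt_le_D[OF RHI] by (simp add: A_def)
  then have "A \<le> (C * J)\<^sup>2 / s\<^sup>2"
    using s by (simp add: field_simps power2_eq_square)
  then have "measure lebesgue E * A \<le> k\<^sup>2 * s\<^sup>2 * ((C * J)\<^sup>2 / s\<^sup>2)"
    using E_small A by (intro mult_mono) auto
  also have "\<dots> = (k * C * J)\<^sup>2"
    using s by (simp add: field_simps power2_eq_square)
  finally have EA: "measure lebesgue E * A \<le> (k * C * J)\<^sup>2" .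
  have "(LINT z:ball a s|lebesgue. \<bar>\<omega> z\<bar>) \<le> sqrt (measure lebesgue E * A)"
    unfolding A_def by (rule set_integral_abs_le_sqrt_measure_support[OF int_abs int_sq E])
  also have "\<dots> \<le> k * C * J"
    using EA k CJ by (intro real_le_lsqrt) (simp_all add: mult.assoc)
  finally show ?thesis .
qed

lemma halving_decay_imp_power_bound:
  fixes I :: "real \<Rightarrow> real" and N :: nat
  assumes r0: "0 < r0"
    and mono: "\<And>r r'. 0 < r \<Longrightarrow> r \<le> r' \<Longrightarrow> r' \<le> 2 * r0 \<Longrightarrow> I r \<le> I r'"
    and nonneg: "\<And>r. 0 < r \<Longrightarrow> r \<le> 2 * r0 \<Longrightarrow> 0 \<le> I r"
    and halving: "\<And>s. 0 < s \<Longrightarrow> s \<le> r0 \<Longrightarrow> I s \<le> (1/2) ^ N * I (2 * s)"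
    and r: "0 < r" "r \<le> r0"
  shows "I r \<le> (r / r0) ^ N * I (2 * r0)"
proof -
  have "\<forall>r. r0 / 2 ^ n < r \<and> r \<le> r0 \<longrightarrow> I r \<le> (r / r0) ^ N * I (2 * r0)" for n :: nat
  proof (induction n)
    case 0
    then show ?case by auto
  next
    case (Suc n)
    show ?case
    proof (intro allI impI)
      fix r assume r: "r0 / 2 ^ Suc n < r \<and> r \<le> r0"
      moreover have "0 < r0 / 2 ^ Suc n" using r0 by simp
      ultimately have "0 < r" by linarith
      have step: "I r \<le> (1/2) ^ N * I (2 * r)" using halving \<open>0 < r\<close> r by simp
      show "I r \<le> (r / r0) ^ N * I (2 * r0)"
      proof (cases "r0 < 2 * r")
        case True
        have "(1/2) ^ N \<le> (r / r0) ^ N"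
          using True r0 by (intro power_mono) (auto simp: field_simps)
        moreover have "I (2 * r) \<le> I (2 * r0)" using mono \<open>0 < r\<close> r by simp
        ultimately have "(1/2) ^ N * I (2 * r) \<le> (r / r0) ^ N * I (2 * r0)"
          using nonneg[of "2 * r"] \<open>0 < r\<close> r by (intro mult_mono) auto
        then show ?thesis using step by linarith
      next
        case False
        have "r0 / 2 ^ n < 2 * r" using r by (simp add: field_simps)
        then have "I (2 * r) \<le> (2 * r / r0) ^ N * I (2 * r0)"
          using Suc.IH False by simp
        then have "(1/2) ^ N * I (2 * r) \<le> (1/2) ^ N * ((2 * r / r0) ^ N * I (2 * r0))"
          by (intro mult_left_mono) auto
        also have "\<dots> = ((1/2) * (2 * r / r0)) ^ N * I (2 * r0)"
          by (simp only: power_mult_distrib mult.assoc)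
        also have "(1/2) * (2 * r / r0) = r / r0" by simp
        finally show ?thesis using step by linarith
      qed
    qed
  qed
  moreover obtain n where "r0 / r < 2 ^ n" using real_arch_pow[of 2 "r0 / r"] by auto
  then have "r0 / 2 ^ n < r" using r by (simp add: field_simps)
  ultimately show ?thesis using r by blast
qed

lemma power_decay_at_density_point:
  fixes \<Omega> :: "complex set" and \<omega> :: "complex \<Rightarrow> real" and N :: nat
  assumes \<Omega>: "open \<Omega>" and L2: "L2_loc \<Omega> \<omega>" and C: "0 < C"
    and RHI: "\<And>a r. 0 < r \<Longrightarrow> ball a (2 * r) \<subseteq> \<Omega> \<Longrightarrow>
       sqrt ((1 / r\<^sup>2) * (LINT z:ball a r|lebesgue. (\<omega> z)\<^sup>2))
         \<le> (C / r\<^sup>2) * (LINT z:ball a (2 * r)|lebesgue. \<bar>\<omega> z\<bar>)"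
    and z0: "z0 \<in> \<Omega>" and dens: "density_point {z\<in>\<Omega>. \<omega> z = 0} z0"
  shows "\<exists>r0>0. ball z0 (2 * r0) \<subseteq> \<Omega> \<and>
           (\<forall>r. 0 < r \<and> r \<le> r0 \<longrightarrow>
              (LINT z:ball z0 r|lebesgue. \<bar>\<omega> z\<bar>)
                \<le> (r ^ N / r0 ^ N) * (LINT z:ball z0 (2 * r0)|lebesgue. \<bar>\<omega> z\<bar>))"
proof -
  define Z where "Z = {z\<in>\<Omega>. \<omega> z = 0}"
  define I where "I = (\<lambda>r. LINT z:ball z0 r|lebesgue. \<bar>\<omega> z\<bar>)"
  \<comment> \<open>\<open>m(D(z0,s) - Z) \<le> (k\<^sup>2/\<pi>) m(D(z0,s)) = k\<^sup>2 s\<^sup>2\<close>, so the halving factor \<open>k C\<close> is \<open>2\<^sup>-\<^sup>N\<close>.\<close>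
  define k where "k = (1/2) ^ N / C"
  have k: "0 < k" using C by (simp add: k_def)
  have "0 < k\<^sup>2 / pi" using k by simp
  then obtain r0 where r0: "0 < r0" and cb: "cball z0 (2 * r0) \<subseteq> \<Omega>"
    and small: "\<And>s. 0 < s \<Longrightarrow> s \<le> r0 \<Longrightarrow>
      measure lebesgue (ball z0 s - Z) \<le> k\<^sup>2 / pi * measure lebesgue (ball z0 s)"
    using density_point_small_radius[OF \<Omega> z0 dens] unfolding Z_def by blast
  have ball_sub: "ball z0 r \<subseteq> cball z0 (2 * r0)" if "r \<le> 2 * r0" for r
    using that by (meson ball_subset_cball subset_cball order.trans)
  have int_abs: "set_integrable lebesgue (ball z0 r) (\<lambda>z. \<bar>\<omega> z\<bar>)" if "r \<le> 2 * r0" for r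
    using ball_sub[OF that] by (intro L2_loc_set_integrable_abs[OF L2 compact_cball cb]) auto
  have halving: "I s \<le> (1/2) ^ N * I (2 * s)" if s: "0 < s" "s \<le> r0" for s
  proof -
    have "s \<le> 2 * r0" "2 * s \<le> 2 * r0" using s r0 by auto
    note sub = ball_sub[OF this(1)] ball_sub[OF this(2)]
    have "I s \<le> k * C * I (2 * s)"
      unfolding I_def
    proof (rule reverse_Hoelder_halving_step[OF s(1) order.strict_implies_order[OF k]])
      show "set_integrable lebesgue (ball z0 s) (\<lambda>z. \<bar>\<omega> z\<bar>)" using int_abs s r0 by simp
      show "set_integrable lebesgue (ball z0 s) (\<lambda>z. (\<omega> z)\<^sup>2)"
        using sub by (intro L2_loc_set_integrable_square[OF L2 compact_cball cb]) auto
      show "ball z0 s - Z \<in> lmeasurable"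
        using L2_loc_zero_set_measurable[OF \<Omega> L2] unfolding Z_def
        by (intro fmeasurable_Diff lmeasurable_ball)
      show "z \<in> ball z0 s - Z" if "z \<in> ball z0 s" "\<omega> z \<noteq> 0" for z
        using that sub cb by (auto simp: Z_def)
      show "measure lebesgue (ball z0 s - Z) \<le> k\<^sup>2 * s\<^sup>2"
        using small[OF s] s by (simp add: content_ball unit_ball_vol_2)
      show "sqrt ((1 / s\<^sup>2) * (LINT z:ball z0 s|lebesgue. (\<omega> z)\<^sup>2))
          \<le> (C / s\<^sup>2) * (LINT z:ball z0 (2 * s)|lebesgue. \<bar>\<omega> z\<bar>)"
        using s(1) sub cb by (intro RHI) auto
    qed
    then show ?thesis using C by (simp add: k_def)
  qed
  have mono: "I r \<le> I r'" if "0 < r" "r \<le> r'" "r' \<le> 2 * r0" for r r'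
    unfolding I_def using that int_abs by (intro set_integral_mono_set) (auto simp: subset_ball)
  have nonneg: "0 \<le> I r" for r by (simp add: I_def set_lebesgue_integral_def)
  have "I r \<le> (r / r0) ^ N * I (2 * r0)" if "0 < r" "r \<le> r0" for r
    by (rule halving_decay_imp_power_bound[where I = I, OF r0 mono nonneg halving that])
  then show ?thesis using r0 cb by (intro exI[of _ r0]) (auto simp: I_def power_divide)
qed

theorem theorem4p1:
  fixes \<Omega> :: "complex set" and \<omega> :: "complex \<Rightarrow> real"
  assumes "open \<Omega>" and "connected \<Omega>"
    and "L2_loc \<Omega> \<omega>"
    and "weak_RHI \<Omega> \<omega>"
  shows "AE z0 in lebesgue. z0 \<in> \<Omega> \<and> \<omega> z0 = 0 \<longrightarrow>
           (\<forall>N::nat. 0 < N \<longrightarrow>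
              (\<exists>r0>0. ball z0 (2 * r0) \<subseteq> \<Omega> \<and>
                 (\<forall>r. 0 < r \<and> r \<le> r0 \<longrightarrow>
                    (LINT z:ball z0 r|lebesgue. \<bar>\<omega> z\<bar>)
                      \<le> (r ^ N / r0 ^ N) * (LINT z:ball z0 (2 * r0)|lebesgue. \<bar>\<omega> z\<bar>))))"
proof -
  obtain C where "0 < C" and RHI: "\<And>a r. 0 < r \<Longrightarrow> ball a (2 * r) \<subseteq> \<Omega> \<Longrightarrow>
     sqrt ((1 / r\<^sup>2) * (LINT z:ball a r|lebesgue. (\<omega> z)\<^sup>2))
       \<le> (C / r\<^sup>2) * (LINT z:ball a (2 * r)|lebesgue. \<bar>\<omega> z\<bar>)"
    using weak_RHI_pos_constant[OF assms(4)] by blast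
  have "{z\<in>\<Omega>. \<omega> z = 0} \<in> sets lebesgue"
    using L2_loc_zero_set_measurable[OF assms(1,3)] .
  from AE_density_point[OF this] show ?thesis
    by eventually_elim (use power_decay_at_density_point[OF assms(1,3) \<open>0 < C\<close> RHI] in blast)
qed

end
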